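(* Let $\theta\in(0,\pi/2)$ and let $\mathcal B$ be a family of Besicovitch balls in $(\mathbb H,d_\alpha)$. Then there is a finite family of points $\{p_j\}$ such that $\mathcal F=\{B(p_j,r_{p_j})\}$ is a family of Besicovitch balls, every $p_j$ satisfies $z_{p_j}\le0$ and $p_j\in\mathcal C(\theta)$, and $\operatorname{Card}\mathcal B\le 2\big(\tfrac{\pi}{\theta}+1\big)\operatorname{Card}\mathcal F+2$.
   Context: $\mathbb H=\mathbb R^3$, $p=(x_p,y_p,z_p)$, group law $(x,y,z)\cdot(x',y',z')=(x+x',y+y',z+z'+\tfrac12(xy'-yx'))$, dilations $\delta_\lambda(x,y,z)=(\lambda x,\lambda y,\lambda^2z)$. Fix $\alpha>0$ such that $d_\alpha(p,q)=\inf\{r>0:\delta_{1/r}(p^{-1}\cdot q)\in B_\alpha\}$ is a distance, $B_\alpha$ the closed Euclidean ball of radius $\alpha$ at $0$. $B(p,r)=\{q:d_\alpha(q,p)\le r\}$ and $r_p=d_\alpha(0,p)$. $\mathcal C(\theta)=\{p: |y_p|<x_p\tan\theta\}$. A family of Besicovitch balls is a finite family of balls $\{B(x_B,r_B)\}$ with $x_B\notin B'$ for distinct members $B,B'$ and with nonempty common intersection. *)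

theory Defs
  imports Complex_Main
begin

type_synonym heis = "real \<times> real \<times> real"

definition hmult :: "heis \<Rightarrow> heis \<Rightarrow> heis" where
  "hmult p q = (case p of (x, y, z) \<Rightarrow> case q of (x', y', z') \<Rightarrow>
      (x + x', y + y', z + z' + (x * y' - y * x') / 2))"

definition hinv :: "heis \<Rightarrow> heis" where
  "hinv p = (case p of (x, y, z) \<Rightarrow> (-x, -y, -z))"

definition hdil :: "real \<Rightarrow> heis \<Rightarrow> heis" where
  "hdil l p = (case p of (x, y, z) \<Rightarrow> (l * x, l * y, l^2 * z))"

definition euclid_ball :: "real \<Rightarrow> heis set" where
  "euclid_ball a = {(x, y, z). sqrt (x^2 + y^2 + z^2) \<le> a}"

definition d_alpha :: "real \<Rightarrow> heis \<Rightarrow> heis \<Rightarrow> real" where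
  "d_alpha a p q = Inf {r. r > 0 \<and> hdil (1 / r) (hmult (hinv p) q) \<in> euclid_ball a}"

definition is_distance :: "(heis \<Rightarrow> heis \<Rightarrow> real) \<Rightarrow> bool" where
  "is_distance d \<longleftrightarrow> (\<forall>p q. d p q = 0 \<longleftrightarrow> p = q) \<and> (\<forall>p q. d p q = d q p)
     \<and> (\<forall>p q s. d p s \<le> d p q + d q s)"

definition hball :: "real \<Rightarrow> heis \<Rightarrow> real \<Rightarrow> heis set" where
  "hball a p r = {q. d_alpha a q p \<le> r}"

definition rad :: "real \<Rightarrow> heis \<Rightarrow> real" where
  "rad a p = d_alpha a (0, 0, 0) p"

definition cone :: "real \<Rightarrow> heis set" where
  "cone \<theta> = {(x, y, z). \<bar>y\<bar> < x * tan \<theta>}"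

text \<open>A family of balls is represented as a set of (centre, radius) pairs.\<close>
definition besicovitch :: "real \<Rightarrow> (heis \<times> real) set \<Rightarrow> bool" where
  "besicovitch a F \<longleftrightarrow> finite F \<and> (\<forall>(c, r) \<in> F. r > 0)
     \<and> (\<forall>(c, r) \<in> F. \<forall>(c', r') \<in> F. (c, r) \<noteq> (c', r') \<longrightarrow> c \<notin> hball a c' r')
     \<and> (\<Inter>(c, r) \<in> F. hball a c r) \<noteq> {}"

end

theory Submission
  imports Defs
begin

(* 1. Left translation by the common point q of a Besicovitch family makes q the origin;
      the family is then described by its set S of centres, and the Besicovitch
      condition becomes  d(s,s') > r_{s'}  for distinct s, s' in S  (besicovitch_points).
      Since B(s,r_s) always contains 0, such a set S yields the family {B(s,r_s)}.
   2. Rotations about the z-axis and the flip (x,y,z) -> (x,-y,-z) are group automorphisms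
      commuting with dilations and preserving Euclidean balls, hence d_alpha-isometries
      fixing 0; they preserve besicovitch_points.
   3. At most two centres lie on the z-axis: two on the same side of 0 would contain one
      another in their balls.
   4. With k = floor(pi/theta)+1 rotations by multiples of 2 pi/k, possibly followed by
      the flip, every off-axis centre is moved into the cone C(theta) and {z <= 0}.  These
      2k maps classify the off-axis centres; by pigeonhole one class has at least a
      1/(2k) share, and its image is the required family. *)

section \<open>Left invariance of the distance\<close>

lemma hmult_left_cancel: "hmult (hinv (hmult g p)) (hmult g q) = hmult (hinv p) q"
  by (cases g; cases p; cases q) (simp add: hmult_def hinv_def algebra_simps field_simps)

lemma hmult_hinv_self: "hmult (hinv p) p = (0, 0, 0)"
  by (cases p) (simp add: hmult_def hinv_def)

text \<open>The distance is defined through the left quotient only, so it is left invariant.\<close>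
lemma d_alpha_left_invariant: "d_alpha a (hmult g p) (hmult g q) = d_alpha a p q"
  unfolding d_alpha_def hmult_left_cancel ..

lemma distance_zero_iff: "is_distance d \<Longrightarrow> d p q = 0 \<longleftrightarrow> p = q"
  unfolding is_distance_def by blast

lemma distance_nonneg:
  assumes "is_distance d" shows "d p q \<ge> 0"
proof -
  have "d p p \<le> d p q + d q p" and "d p p = 0" and "d q p = d p q"
    using assms unfolding is_distance_def by blast+
  then show ?thesis by linarith
qed

section \<open>Isometric automorphisms\<close>

definition isometric_aut :: "(heis \<Rightarrow> heis) \<Rightarrow> bool" where
  "isometric_aut f \<longleftrightarrow> (\<forall>p q. f (hmult p q) = hmult (f p) (f q)) \<and> (\<forall>p. f (hinv p) = hinv (f p))
    \<and> (\<forall>l p. f (hdil l p) = hdil l (f p)) \<and> (\<forall>a p. f p \<in> euclid_ball a \<longleftrightarrow> p \<in> euclid_ball a)"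

lemma isometric_aut_d_alpha: "isometric_aut f \<Longrightarrow> d_alpha a (f p) (f q) = d_alpha a p q"
  unfolding d_alpha_def isometric_aut_def by metis

lemma isometric_aut_origin:
  assumes "isometric_aut f" shows "f (0, 0, 0) = (0, 0, 0)"
proof -
  have "f (hdil 0 (0, 0, 0)) = hdil 0 (f (0, 0, 0))"
    using assms unfolding isometric_aut_def by blast
  then show ?thesis by (cases "f (0, 0, 0)") (simp add: hdil_def)
qed

lemma isometric_aut_rad: "isometric_aut f \<Longrightarrow> rad a (f p) = rad a p"
  unfolding rad_def by (metis isometric_aut_origin isometric_aut_d_alpha)

lemma isometric_aut_inj:
  assumes "isometric_aut f" "is_distance (d_alpha a)" shows "inj f"
proof
  fix p q assume "f p = f q"
  then have "d_alpha a (f p) (f q) = 0" using distance_zero_iff[OF assms(2)] by simp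
  then show "p = q" using isometric_aut_d_alpha[OF assms(1)] distance_zero_iff[OF assms(2)] by simp
qed

lemma isometric_aut_id: "isometric_aut id"
  unfolding isometric_aut_def by simp

lemma isometric_aut_comp: "isometric_aut f \<Longrightarrow> isometric_aut g \<Longrightarrow> isometric_aut (f \<circ> g)"
  unfolding isometric_aut_def by (simp del: split_paired_All)

definition hrot :: "real \<Rightarrow> heis \<Rightarrow> heis" where
  "hrot t p = (case p of (x, y, z) \<Rightarrow> (x * cos t - y * sin t, x * sin t + y * cos t, z))"

text \<open>Reflection in the \<open>x\<close>-axis; it reverses the symplectic form, so it must negate \<open>z\<close>.\<close>
definition hflip :: "heis \<Rightarrow> heis" where
  "hflip p = (case p of (x, y, z) \<Rightarrow> (x, -y, -z))"

lemma rotation_norm: "(x * cos t - y * sin t)^2 + (x * sin t + y * cos t)^2 = x^2 + (y::real)^2"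
proof -
  have "(x * cos t - y * sin t)^2 + (x * sin t + y * cos t)^2 = (x^2 + y^2) * ((sin t)^2 + (cos t)^2)"
    by algebra
  then show ?thesis by simp
qed

lemma rotation_symplectic:
  "(x * cos t - y * sin t) * (x' * sin t + y' * cos t) - (x * sin t + y * cos t) * (x' * cos t - y' * sin t)
   = x * y' - y * (x'::real)"
proof -
  have "(x * cos t - y * sin t) * (x' * sin t + y' * cos t) - (x * sin t + y * cos t) * (x' * cos t - y' * sin t)
   = (x * y' - y * x') * ((sin t)^2 + (cos t)^2)"
    by algebra
  then show ?thesis by simp
qed

lemma isometric_aut_hrot: "isometric_aut (hrot t)"
  unfolding isometric_aut_def
proof (intro conjI allI)
  fix p q :: heis
  obtain x y z x' y' z' where pq: "p = (x, y, z)" "q = (x', y', z')" by (cases p; cases q)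
  define r where "r = (x * cos t - y * sin t + (x' * cos t - y' * sin t),
       x * sin t + y * cos t + (x' * sin t + y' * cos t), z + z' + (x * y' - y * x') / 2)"
  have "hmult (hrot t p) (hrot t q) = r"
    unfolding r_def by (simp only: pq hrot_def hmult_def prod.case rotation_symplectic)
  moreover have "hrot t (hmult p q) = r"
    unfolding r_def by (simp add: pq hrot_def hmult_def algebra_simps)
  ultimately show "hrot t (hmult p q) = hmult (hrot t p) (hrot t q)" by simp
next
  fix p show "hrot t (hinv p) = hinv (hrot t p)"
    by (cases p) (simp add: hrot_def hinv_def algebra_simps)
next
  fix l p show "hrot t (hdil l p) = hdil l (hrot t p)"
    by (cases p) (simp add: hrot_def hdil_def algebra_simps)
next
  fix a p show "hrot t p \<in> euclid_ball a \<longleftrightarrow> p \<in> euclid_ball a"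
    by (cases p) (simp add: hrot_def euclid_ball_def rotation_norm)
qed

lemma isometric_aut_hflip: "isometric_aut hflip"
  unfolding isometric_aut_def
proof (intro conjI allI)
  fix p q show "hflip (hmult p q) = hmult (hflip p) (hflip q)"
    by (cases p; cases q) (simp add: hflip_def hmult_def algebra_simps add_divide_distrib diff_divide_distrib)
next
  fix p show "hflip (hinv p) = hinv (hflip p)"
    by (cases p) (simp add: hflip_def hinv_def)
next
  fix l p show "hflip (hdil l p) = hdil l (hflip p)"
    by (cases p) (simp add: hflip_def hdil_def)
next
  fix a p show "hflip p \<in> euclid_ball a \<longleftrightarrow> p \<in> euclid_ball a"
    by (cases p) (simp add: hflip_def euclid_ball_def)
qed

section \<open>Centred Besicovitch configurations\<close>

text \<open>A set of centres such that no point lies in the ball \<open>B(s', r\<^sub>s\<^sub>')\<close> of another one;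
  the balls \<open>B(s, r\<^sub>s)\<close> all contain the origin.\<close>
definition besicovitch_points :: "real \<Rightarrow> heis set \<Rightarrow> bool" where
  "besicovitch_points a S \<longleftrightarrow> (\<forall>s\<in>S. \<forall>s'\<in>S. s \<noteq> s' \<longrightarrow> d_alpha a s s' > rad a s')"

lemma besicovitch_points_subset: "besicovitch_points a S \<Longrightarrow> T \<subseteq> S \<Longrightarrow> besicovitch_points a T"
  unfolding besicovitch_points_def by blast

lemma besicovitch_points_image:
  assumes "isometric_aut f" "besicovitch_points a S" shows "besicovitch_points a (f ` S)"
  unfolding besicovitch_points_def
proof (intro ballI impI)
  fix s s' assume "s \<in> f ` S" "s' \<in> f ` S" "s \<noteq> s'"
  then obtain p p' where "p \<in> S" "p' \<in> S" "p \<noteq> p'" "s = f p" "s' = f p'" by blast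
  then show "rad a s' < d_alpha a s s'"
    using assms unfolding besicovitch_points_def by (simp add: isometric_aut_d_alpha isometric_aut_rad)
qed

text \<open>The origin can only be a centre of a trivial configuration, since \<open>d(0, s) = r\<^sub>s\<close>.\<close>
lemma besicovitch_points_origin:
  assumes "besicovitch_points a S" "(0, 0, 0) \<in> S" shows "S = {(0, 0, 0)}"
proof -
  have "s = (0, 0, 0)" if "s \<in> S" for s
  proof (rule ccontr)
    assume "s \<noteq> (0, 0, 0)"
    then have "d_alpha a (0, 0, 0) s > rad a s" using assms that unfolding besicovitch_points_def by auto
    then show False unfolding rad_def by simp
  qed
  then show ?thesis using assms(2) by blast
qed

text \<open>Translating the common point of a Besicovitch family to the origin.\<close>
lemma besicovitch_centred:
  assumes dist: "is_distance (d_alpha a)" and B: "besicovitch a B"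
  shows "\<exists>S. finite S \<and> card S = card B \<and> besicovitch_points a S"
proof -
  from B have fin: "finite B" and pos_pairs: "\<forall>(c, r)\<in>B. 0 < r"
    and sep_pairs: "\<forall>(c, r)\<in>B. \<forall>(c', r')\<in>B. (c, r) \<noteq> (c', r') \<longrightarrow> c \<notin> hball a c' r'"
    and common: "(\<Inter>(c, r)\<in>B. hball a c r) \<noteq> {}"
    unfolding besicovitch_def by auto
  have pos: "snd y > 0" if "y \<in> B" for y
    using pos_pairs that by (auto simp: case_prod_beta)
  have sep: "d_alpha a (fst x) (fst y) > snd y" if "x \<in> B" "y \<in> B" "x \<noteq> y" for x y
    using sep_pairs that by (auto simp: case_prod_beta hball_def not_le prod_eq_iff)
  obtain q where q: "\<And>y. y \<in> B \<Longrightarrow> d_alpha a q (fst y) \<le> snd y"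
    using common by (auto simp: hball_def case_prod_beta)
  define tr where "tr cr = hmult (hinv q) (fst cr)" for cr :: "heis \<times> real"
  have d_tr: "d_alpha a (tr x) (tr y) = d_alpha a (fst x) (fst y)" for x y
    unfolding tr_def d_alpha_left_invariant ..
  have rad_tr: "rad a (tr y) = d_alpha a q (fst y)" for y
    unfolding rad_def tr_def by (metis d_alpha_left_invariant hmult_hinv_self)
  text \<open>Distinct balls have distinct centres: a ball contains its own centre.\<close>
  have "inj_on tr B"
  proof (rule inj_onI, rule ccontr)
    fix x y assume xy: "x \<in> B" "y \<in> B" "tr x = tr y" "x \<noteq> y"
    then have "d_alpha a (tr x) (tr y) = 0" using distance_zero_iff[OF dist] by simp
    then have "fst x = fst y" using d_tr[of x y] distance_zero_iff[OF dist] by simp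
    moreover have "d_alpha a (fst x) (fst y) > snd y" and "snd y > 0"
      using sep pos xy by auto
    ultimately show False using distance_zero_iff[OF dist, of "fst y" "fst y"] by simp
  qed
  moreover have "besicovitch_points a (tr ` B)"
    unfolding besicovitch_points_def
  proof (intro ballI impI)
    fix s s' assume "s \<in> tr ` B" "s' \<in> tr ` B" "s \<noteq> s'"
    then obtain x y where xy: "x \<in> B" "y \<in> B" "x \<noteq> y" "s = tr x" "s' = tr y" by blast
    then have "d_alpha a (fst x) (fst y) > snd y" using sep by blast
    moreover have "d_alpha a q (fst y) \<le> snd y" using q xy by blast
    ultimately show "rad a s' < d_alpha a s s'" using xy d_tr rad_tr by simp
  qed
  ultimately show ?thesis using fin card_image by (intro exI[of _ "tr ` B"]) auto
qed

lemma besicovitch_of_points: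
  assumes dist: "is_distance (d_alpha a)" and "finite P" "besicovitch_points a P" "(0, 0, 0) \<notin> P"
  shows "besicovitch a ((\<lambda>p. (p, rad a p)) ` P)"
  unfolding besicovitch_def
proof (intro conjI)
  have "rad a p > 0" if "p \<in> P" for p
  proof -
    have "rad a p \<noteq> 0" using that assms(4) distance_zero_iff[OF dist] unfolding rad_def by metis
    moreover have "rad a p \<ge> 0" unfolding rad_def by (rule distance_nonneg[OF dist])
    ultimately show ?thesis by linarith
  qed
  then show "\<forall>(c, r)\<in>(\<lambda>p. (p, rad a p)) ` P. 0 < r" by auto
  have "p \<notin> hball a p' (rad a p')" if "p \<in> P" "p' \<in> P" "p \<noteq> p'" for p p'
    using assms(3) that unfolding besicovitch_points_def hball_def by (simp add: not_le)
  then show "\<forall>(c, r)\<in>(\<lambda>p. (p, rad a p)) ` P. \<forall>(c', r')\<in>(\<lambda>p. (p, rad a p)) ` P.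
          (c, r) \<noteq> (c', r') \<longrightarrow> c \<notin> hball a c' r'" by auto
  have "(0, 0, 0) \<in> hball a p (rad a p)" for p
    unfolding hball_def rad_def by simp
  then show "(\<Inter>(c, r)\<in>(\<lambda>p. (p, rad a p)) ` P. hball a c r) \<noteq> {}" by blast
qed (use assms(2) in simp)

section \<open>Centres on the vertical axis\<close>

definition on_axis :: "heis \<Rightarrow> bool" where
  "on_axis p \<longleftrightarrow> fst p = 0 \<and> fst (snd p) = 0"

lemma axis_dilation_in_ball: "hdil (1 / r) (0, 0, w) \<in> euclid_ball a \<longleftrightarrow> \<bar>w\<bar> / r^2 \<le> a"
  by (simp add: hdil_def euclid_ball_def power_divide)

lemma d_alpha_axis_mono:
  assumes "a > 0" "\<bar>v - u\<bar> \<le> \<bar>v\<bar>"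
  shows "d_alpha a (0, 0, u) (0, 0, v) \<le> d_alpha a (0, 0, 0) (0, 0, v)"
proof -
  define scales where "scales w = {r. 0 < r \<and> \<bar>w\<bar> / r^2 \<le> a}" for w
  have d_axis: "d_alpha a (0, 0, w) (0, 0, v) = Inf (scales (v - w))" for w
    unfolding d_alpha_def scales_def by (simp add: hmult_def hinv_def axis_dilation_in_ball)
  define r where "r = 1 + \<bar>v\<bar> / a"
  have "r \<ge> 1" using assms(1) by (simp add: r_def)
  have "\<bar>v\<bar> \<le> a * r" using assms(1) by (simp add: r_def field_simps)
  also have "\<dots> \<le> a * r^2"
    using assms(1) \<open>r \<ge> 1\<close> by (intro mult_left_mono) (auto simp: power2_eq_square)
  finally have "r \<in> scales v" using \<open>r \<ge> 1\<close> by (simp add: scales_def divide_le_eq mult.commute)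
  then have nonempty: "scales v \<noteq> {}" by blast
  have "scales v \<subseteq> scales (v - u)"
  proof
    fix r assume "r \<in> scales v"
    moreover have "\<bar>v - u\<bar> / r^2 \<le> \<bar>v\<bar> / r^2" using assms(2) by (simp add: divide_right_mono)
    ultimately show "r \<in> scales (v - u)" by (simp add: scales_def)
  qed
  moreover have "bdd_below (scales (v - u))" by (rule bdd_belowI[of _ 0]) (simp add: scales_def)
  ultimately show ?thesis unfolding d_axis using nonempty by (simp add: cInf_superset_mono)
qed

lemma axis_same_side_card:
  assumes a: "a > 0" and B: "besicovitch_points a S" and fin: "finite A" and AS: "A \<subseteq> S"
    and axis: "\<forall>s\<in>A. on_axis s"
    and side: "(\<forall>s\<in>A. snd (snd s) > 0) \<or> (\<forall>s\<in>A. snd (snd s) < 0)"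
  shows "card A \<le> 1"
proof -
  have closer: False if "(0, 0, u) \<in> S" "(0, 0, v) \<in> S" "u \<noteq> v" "\<bar>v - u\<bar> \<le> \<bar>v\<bar>" for u v
  proof -
    have "d_alpha a (0, 0, u) (0, 0, v) > rad a (0, 0, v)" using B that unfolding besicovitch_points_def by auto
    with d_alpha_axis_mono[OF a that(4)] show False unfolding rad_def by simp
  qed
  have "s1 = s2" if "s1 \<in> A" "s2 \<in> A" for s1 s2
  proof -
    define u v where "u = snd (snd s1)" and "v = snd (snd s2)"
    have uv: "s1 = (0, 0, u)" "s2 = (0, 0, v)"
      using axis that unfolding on_axis_def u_def v_def by (auto simp: prod_eq_iff)
    have "(u > 0 \<and> v > 0) \<or> (u < 0 \<and> v < 0)" using side that by (auto simp: u_def v_def)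
    then have side_ineq: "\<bar>v - u\<bar> \<le> \<bar>v\<bar> \<or> \<bar>u - v\<bar> \<le> \<bar>u\<bar>" by linarith
    show ?thesis
    proof (rule ccontr)
      assume "s1 \<noteq> s2"
      then have "u \<noteq> v" using uv by auto
      moreover have "(0, 0, u) \<in> S" "(0, 0, v) \<in> S" using that uv AS by auto
      ultimately show False using side_ineq closer[of u v] closer[of v u] by (auto simp: eq_commute)
    qed
  qed
  then show ?thesis using card_le_Suc0_iff_eq[OF fin] by simp
qed

lemma axis_card:
  assumes a: "a > 0" and B: "besicovitch_points a S" and fin: "finite S"
  shows "card {s\<in>S. on_axis s} \<le> 2"
proof (cases "(0, 0, 0) \<in> S")
  case True
  have "card {s\<in>S. on_axis s} \<le> card S" by (rule card_mono[OF fin]) auto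
  then show ?thesis using besicovitch_points_origin[OF B True] by simp
next
  case False
  have axis_off_origin: "snd (snd s) \<noteq> 0" if "s \<in> S" "on_axis s" for s
    using False that unfolding on_axis_def by (cases s) auto
  let ?up = "{s\<in>S. on_axis s \<and> snd (snd s) > 0}" and ?down = "{s\<in>S. on_axis s \<and> snd (snd s) < 0}"
  have "{s\<in>S. on_axis s} \<subseteq> ?up \<union> ?down" using axis_off_origin by (auto simp: linorder_neq_iff)
  then have "card {s\<in>S. on_axis s} \<le> card (?up \<union> ?down)" by (intro card_mono) (use fin in auto)
  also have "\<dots> \<le> card ?up + card ?down" by (rule card_Un_le)
  also have "card ?up \<le> 1" by (rule axis_same_side_card[OF a B]) (use fin in auto)
  also have "card ?down \<le> 1" by (rule axis_same_side_card[OF a B]) (use fin in auto)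
  finally show ?thesis by simp
qed

section \<open>Moving off-axis centres into the cone\<close>

text \<open>Centres in the cone are never the origin, so their balls have positive radius.\<close>
lemma origin_not_in_cone: "(0, 0, 0) \<notin> cone \<theta>"
  by (simp add: cone_def)

lemma hflip_cone: "hflip p \<in> cone t \<longleftrightarrow> p \<in> cone t"
  by (cases p) (simp add: hflip_def cone_def)

lemma polar_point_in_cone:
  assumes "\<rho> > 0" "\<bar>\<psi>\<bar> < \<theta>" "\<theta> < pi / 2"
  shows "(\<rho> * cos \<psi>, \<rho> * sin \<psi>, z) \<in> cone \<theta>"
proof -
  have "cos \<theta> > 0" "cos \<psi> > 0" using assms by (auto intro: cos_gt_zero_pi)
  have "sin \<bar>\<psi>\<bar> = \<bar>sin \<psi>\<bar>"
  proof (cases "\<psi> \<ge> 0")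
    case True
    then have "sin \<psi> \<ge> 0" using assms by (intro sin_ge_zero) auto
    then show ?thesis using True by simp
  next
    case False
    then have "sin (- \<psi>) \<ge> 0" using assms by (intro sin_ge_zero) auto
    then show ?thesis using False by simp
  qed
  moreover have "cos \<bar>\<psi>\<bar> = cos \<psi>" by (simp add: abs_if)
  moreover have "sin (\<theta> - \<bar>\<psi>\<bar>) > 0" using assms by (intro sin_gt_zero) auto
  ultimately have "\<bar>sin \<psi>\<bar> * cos \<theta> < cos \<psi> * sin \<theta>" by (simp add: sin_diff mult.commute)
  then have "\<bar>sin \<psi>\<bar> < cos \<psi> * tan \<theta>"
    using \<open>cos \<theta> > 0\<close> by (simp add: tan_def less_divide_eq)
  then show ?thesis using assms(1) unfolding cone_def by (simp add: abs_mult)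
qed

lemma hrot_polar:
  "hrot (-\<tau>) (\<rho> * cos \<phi>, \<rho> * sin \<phi>, z) = (\<rho> * cos (\<phi> - \<tau>), \<rho> * sin (\<phi> - \<tau>), z)"
  by (simp add: hrot_def cos_diff sin_diff algebra_simps)

lemma polar_coordinates:
  fixes x y :: real
  assumes "(x, y) \<noteq> (0, 0)"
  obtains \<rho> \<phi> where "\<rho> > 0" "0 \<le> \<phi>" "\<phi> < 2 * pi" "x = \<rho> * cos \<phi>" "y = \<rho> * sin \<phi>"
proof -
  define \<rho> where "\<rho> = sqrt (x^2 + y^2)"
  have pos: "x^2 + y^2 > 0" using assms by (auto simp: sum_power2_gt_zero_iff)
  then have "\<rho> > 0" and \<rho>_sq: "\<rho>^2 = x^2 + y^2" by (simp_all add: \<rho>_def)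
  have "(x / \<rho>)^2 + (y / \<rho>)^2 = (x^2 + y^2) / \<rho>^2" by (simp add: power_divide add_divide_distrib)
  also have "\<dots> = 1" using \<open>\<rho> > 0\<close> by (simp flip: \<rho>_sq)
  finally have "(x / \<rho>)^2 + (y / \<rho>)^2 = 1" .
  then obtain \<phi> where "0 \<le> \<phi>" "\<phi> < 2 * pi" "x / \<rho> = cos \<phi>" "y / \<rho> = sin \<phi>"
    by (rule sincos_total_2pi)
  with \<open>\<rho> > 0\<close> show ?thesis by (intro that[of \<rho> \<phi>]) (auto simp: field_simps)
qed

lemma nearest_rotation:
  assumes k: "k \<ge> 1" and \<phi>: "0 \<le> \<phi>" "\<phi> < 2 * pi"
  defines "\<delta> \<equiv> 2 * pi / real k"
  shows "\<exists>j<k. \<exists>\<psi>. \<bar>\<psi>\<bar> \<le> \<delta> / 2 \<and> cos (\<phi> - real j * \<delta>) = cos \<psi> \<and> sin (\<phi> - real j * \<delta>) = sin \<psi>"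
proof -
  have \<delta>: "\<delta> > 0" "real k * \<delta> = 2 * pi" using k by (simp_all add: \<delta>_def)
  define j where "j = \<lfloor>\<phi> / \<delta> + 1 / 2\<rfloor>"
  define \<psi> where "\<psi> = \<phi> - of_int j * \<delta>"
  have "\<bar>\<phi> / \<delta> - of_int j\<bar> \<le> 1 / 2" unfolding j_def by linarith
  moreover have "\<psi> = \<delta> * (\<phi> / \<delta> - of_int j)" using \<delta> by (simp add: \<psi>_def field_simps)
  ultimately have \<psi>: "\<bar>\<psi>\<bar> \<le> \<delta> / 2" using \<delta> by (simp add: abs_mult)
  have "\<phi> / \<delta> < real k" using \<phi> \<delta> by (simp add: divide_less_eq mult.commute)
  moreover have "0 \<le> j" using \<phi> \<delta> by (simp add: j_def)
  ultimately consider "nat j < k" "real (nat j) = of_int j" | "j = int k"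
    unfolding j_def by linarith
  then show ?thesis
  proof cases
    case 1
    then have "cos (\<phi> - real (nat j) * \<delta>) = cos \<psi>" "sin (\<phi> - real (nat j) * \<delta>) = sin \<psi>"
      by (simp_all add: \<psi>_def)
    then show ?thesis using 1 \<psi> by blast
  next
    case 2
    then have "\<phi> - real 0 * \<delta> = \<psi> + 2 * pi" using \<delta> by (simp add: \<psi>_def)
    then show ?thesis using \<psi> k by (intro exI[of _ 0]) auto
  qed
qed

lemma angle_cover:
  assumes \<theta>: "0 < \<theta>" "\<theta> < pi / 2" and k: "k \<ge> 1" "pi / \<theta> < real k" and off: "\<not> on_axis s"
  shows "\<exists>j<k. hrot (- (real j * (2 * pi / real k))) s \<in> cone \<theta>"
proof -
  obtain x y z where s: "s = (x, y, z)" by (cases s)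
  then obtain \<rho> \<phi> where pol: "\<rho> > 0" "0 \<le> \<phi>" "\<phi> < 2 * pi" "x = \<rho> * cos \<phi>" "y = \<rho> * sin \<phi>"
    using off polar_coordinates[of x y] unfolding on_axis_def by auto
  have "pi < \<theta> * real k" using k \<theta> by (simp add: divide_less_eq mult.commute)
  then have half_step: "2 * pi / real k / 2 < \<theta>" using k by (simp add: divide_less_eq mult.commute)
  obtain j \<psi> where "j < k" "\<bar>\<psi>\<bar> \<le> 2 * pi / real k / 2"
    and "cos (\<phi> - real j * (2 * pi / real k)) = cos \<psi>" "sin (\<phi> - real j * (2 * pi / real k)) = sin \<psi>"
    using nearest_rotation[OF k(1) pol(2,3)] by blast
  moreover have "(\<rho> * cos \<psi>, \<rho> * sin \<psi>, z) \<in> cone \<theta>"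
    using polar_point_in_cone[OF pol(1) _ \<theta>(2)] \<open>\<bar>\<psi>\<bar> \<le> _\<close> half_step by simp
  ultimately show ?thesis unfolding s pol(4,5) hrot_polar by auto
qed

text \<open>The \<open>2k\<close> normalizing isometries: a rotation by a multiple of \<open>2\<pi>/k\<close>, followed by the
  flip when the point lies above the horizontal plane.\<close>
definition sector_normalizer :: "nat \<Rightarrow> nat \<times> bool \<Rightarrow> heis \<Rightarrow> heis" where
  "sector_normalizer k i = (if snd i then hflip else id) \<circ> hrot (- (real (fst i) * (2 * pi / real k)))"

lemma isometric_aut_sector_normalizer: "isometric_aut (sector_normalizer k i)"
  unfolding sector_normalizer_def
  by (intro isometric_aut_comp isometric_aut_hrot) (simp add: isometric_aut_hflip isometric_aut_id)

text \<open>Each off-axis point is sent into \<open>C(\<theta>) \<inter> {z \<le> 0}\<close> by one of the \<open>2k\<close> normalizers;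
  rotations keep the height and the flip keeps the cone while negating the height.\<close>
lemma sector_normalizer_exists:
  assumes "0 < \<theta>" "\<theta> < pi / 2" "k \<ge> 1" "pi / \<theta> < real k" "\<not> on_axis s"
  shows "\<exists>i\<in>{..<k} \<times> UNIV. snd (snd (sector_normalizer k i s)) \<le> 0 \<and> sector_normalizer k i s \<in> cone \<theta>"
proof -
  obtain j where j: "j < k" and cone: "hrot (- (real j * (2 * pi / real k))) s \<in> cone \<theta>"
    using angle_cover[OF assms] by blast
  have height: "snd (snd (hrot t p)) = snd (snd p)" "snd (snd (hflip p)) = - snd (snd p)" for t p
    by (cases p; simp add: hrot_def hflip_def)+
  show ?thesis
    using j cone by (intro bexI[of _ "(j, 0 < snd (snd s))"])
      (auto simp: sector_normalizer_def height hflip_cone)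
qed

lemma pigeonhole_class:
  assumes "finite I" "I \<noteq> {}" "cls ` S \<subseteq> I"
  shows "\<exists>i\<in>I. card S \<le> card I * card {s\<in>S. cls s = i}"
proof -
  let ?n = "\<lambda>i. card {s\<in>S. cls s = i}"
  have "Max (?n ` I) \<in> ?n ` I" using assms(1,2) by (intro Max_in) auto
  then obtain i where i: "i \<in> I" "?n i = Max (?n ` I)" by auto
  have "S = (\<Union>i\<in>I. {s\<in>S. cls s = i})" using assms(3) by auto
  then have "card S \<le> (\<Sum>i\<in>I. ?n i)" by (metis card_UN_le[OF assms(1)])
  also have "\<dots> \<le> card I * ?n i" using sum_bounded_above[of I ?n "?n i"] i assms(1) by simp
  finally show ?thesis using i(1) by blast
qed

lemma off_axis_reduction:
  assumes dist: "is_distance (d_alpha a)" and \<theta>: "0 < \<theta>" "\<theta> < pi / 2"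
    and S: "finite S" "besicovitch_points a S" and off: "\<forall>s\<in>S. \<not> on_axis s"
  shows "\<exists>P. finite P \<and> besicovitch_points a P \<and> (\<forall>p\<in>P. snd (snd p) \<le> 0 \<and> p \<in> cone \<theta>)
      \<and> real (card S) \<le> 2 * (pi / \<theta> + 1) * real (card P)"
proof -
  define k where "k = nat \<lfloor>pi / \<theta>\<rfloor> + 1"
  have "pi / \<theta> > 0" using \<theta> by simp
  then have k: "k \<ge> 1" "pi / \<theta> < real k" "real k \<le> pi / \<theta> + 1" unfolding k_def by linarith+
  define I where "I = {..<k} \<times> (UNIV :: bool set)"
  define good where "good p \<longleftrightarrow> snd (snd p) \<le> 0 \<and> p \<in> cone \<theta>" for p
  define cls where "cls s = (SOME i. i \<in> I \<and> good (sector_normalizer k i s))" for s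
  have cls: "cls s \<in> I \<and> good (sector_normalizer k (cls s) s)" if "s \<in> S" for s
  proof -
    have "\<exists>i. i \<in> I \<and> good (sector_normalizer k i s)"
      using sector_normalizer_exists[OF \<theta> k(1,2)] off that unfolding I_def good_def by blast
    then show ?thesis unfolding cls_def by (rule someI_ex)
  qed
  have "finite I" "card I = 2 * k" by (simp_all add: I_def card_cartesian_product)
  moreover have "(0, True) \<in> I" using k(1) by (simp add: I_def)
  then have "I \<noteq> {}" by blast
  moreover have "cls ` S \<subseteq> I" using cls by blast
  ultimately obtain i where "i \<in> I" and large: "card S \<le> 2 * k * card {s\<in>S. cls s = i}"
    using pigeonhole_class[of I cls S] by auto
  define C where "C = {s\<in>S. cls s = i}"
  define P where "P = sector_normalizer k i ` C"
  have "inj (sector_normalizer k i)"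
    by (rule isometric_aut_inj[OF isometric_aut_sector_normalizer dist])
  then have "card P = card C" unfolding P_def by (simp add: card_image inj_on_subset)
  then have "real (card S) \<le> 2 * real k * real (card P)"
    using large unfolding C_def by (metis of_nat_le_iff of_nat_mult of_nat_numeral)
  also have "\<dots> \<le> 2 * (pi / \<theta> + 1) * real (card P)" using k(3) by (simp add: mult_right_mono)
  finally have bound: "real (card S) \<le> 2 * (pi / \<theta> + 1) * real (card P)" .
  have "besicovitch_points a P" unfolding P_def
    by (intro besicovitch_points_image isometric_aut_sector_normalizer
        besicovitch_points_subset[OF S(2)]) (simp add: C_def)
  moreover have "\<forall>p\<in>P. snd (snd p) \<le> 0 \<and> p \<in> cone \<theta>"
    using cls unfolding P_def C_def good_def by blast
  moreover have "finite P" using S(1) by (simp add: P_def C_def)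
  ultimately show ?thesis using bound by blast
qed

theorem lemma3p1:
  fixes \<alpha> \<theta> :: real and \<B> :: "(heis \<times> real) set"
  assumes "\<alpha> > 0" and "is_distance (d_alpha \<alpha>)"
    and "0 < \<theta>" and "\<theta> < pi / 2"
    and "besicovitch \<alpha> \<B>"
  shows "\<exists>P :: heis set. finite P
    \<and> besicovitch \<alpha> ((\<lambda>p. (p, rad \<alpha> p)) ` P)
    \<and> (\<forall>p \<in> P. snd (snd p) \<le> 0 \<and> p \<in> cone \<theta>)
    \<and> real (card \<B>) \<le> 2 * (pi / \<theta> + 1) * real (card ((\<lambda>p. (p, rad \<alpha> p)) ` P)) + 2"
proof -
  obtain S where S: "finite S" "card S = card \<B>" "besicovitch_points \<alpha> S"
    using besicovitch_centred[OF assms(2,5)] by blast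
  let ?axis = "{s\<in>S. on_axis s}" and ?off = "{s\<in>S. \<not> on_axis s}"
  have "finite ?off" "besicovitch_points \<alpha> ?off" "\<forall>s\<in>?off. \<not> on_axis s"
    using S(1) besicovitch_points_subset[OF S(3)] by auto
  then obtain P where P: "finite P" "besicovitch_points \<alpha> P" "\<forall>p\<in>P. snd (snd p) \<le> 0 \<and> p \<in> cone \<theta>"
    and off_bound: "real (card ?off) \<le> 2 * (pi / \<theta> + 1) * real (card P)"
    using off_axis_reduction[OF assms(2-4)] by blast
  have "(0, 0, 0) \<notin> P" using P(3) origin_not_in_cone by blast
  then have "besicovitch \<alpha> ((\<lambda>p. (p, rad \<alpha> p)) ` P)"
    by (rule besicovitch_of_points[OF assms(2) P(1,2)])
  moreover have "card ((\<lambda>p. (p, rad \<alpha> p)) ` P) = card P" by (simp add: card_image inj_on_def)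
  moreover have "card \<B> = card ?axis + card ?off"
  proof -
    have "card (?axis \<union> ?off) = card ?axis + card ?off" by (rule card_Un_disjoint) (use S(1) in auto)
    moreover have "?axis \<union> ?off = S" by blast
    ultimately show ?thesis using S(2) by simp
  qed
  moreover have "card ?axis \<le> 2" by (rule axis_card[OF assms(1) S(3,1)])
  ultimately show ?thesis using P(1,3) off_bound by (intro exI[of _ P]) simp
qed

end
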